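(* Let $A\in\mathbb{R}^{r\times(r+1)}$ have full row rank $r$. Let $T$ be an ordered subset of $r$ elements of $\{1,\dots,r+1\}$ such that $\tilde A:=A[:,T]$ is nonsingular and minimizes $\|\tilde A^{-1}\|_1$ among all nonsingular $r\times r$ submatrices of $A$. Let $H\in\mathbb{R}^{(r+1)\times r}$ be the matrix whose rows indexed by $T$ are given by $\tilde A^{-1}$ and whose remaining row is zero. Then $H$ is an ah-symmetric reflexive generalized inverse of $A$ satisfying $\|H\|_1\le\frac{2r}{r+1}\|H_{opt}\|_1$, where $H_{opt}$ is an optimal solution of $\min\{\|H\|_1 : AH=I_r\}$ (which equals $\min\{\|H\|_1: AHA=A\}$ and $\min\{\|H\|_1 : AHA=A,\ HAH=H,\ (AH)^\top=AH\}$).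
   Context: $A[:,T]$ is the submatrix of $A$ formed by the columns indexed by $T$. $\|H\|_1=\sum_{i,j}|H_{ij}|$. $H$ is a generalized inverse of $A$ if $AHA=A$, reflexive if additionally $HAH=H$, and ah-symmetric if $AH$ is symmetric. *)

theory Defs
  imports "Jordan_Normal_Form.DL_Rank"
begin

definition norm1_mat :: "real mat \<Rightarrow> real" where
  "norm1_mat H = (\<Sum>i<dim_row H. \<Sum>j<dim_col H. \<bar>H $$ (i, j)\<bar>)"

definition col_submat :: "'a mat \<Rightarrow> nat list \<Rightarrow> 'a mat" where
  "col_submat A T = mat (dim_row A) (length T) (\<lambda>(i, j). A $$ (i, T ! j))"

text \<open>Inverse of a square matrix (meaningful when it is nonsingular).\<close>
definition inv_mat :: "'a :: field mat \<Rightarrow> 'a mat" where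
  "inv_mat M = (THE B. B \<in> carrier_mat (dim_row M) (dim_row M) \<and>
                      M * B = 1\<^sub>m (dim_row M) \<and> B * M = 1\<^sub>m (dim_row M))"

definition adm_cols :: "nat \<Rightarrow> nat list \<Rightarrow> bool" where
  "adm_cols r T \<longleftrightarrow> distinct T \<and> length T = r \<and> set T \<subseteq> {0..<r+1}"

definition lift_rows :: "nat \<Rightarrow> nat list \<Rightarrow> real mat \<Rightarrow> real mat" where
  "lift_rows m T B = mat m (dim_col B)
     (\<lambda>(i, j). if i \<in> set T then B $$ (THE k. k < length T \<and> T ! k = i, j) else 0)"

end

theory Submission
  imports Defs
begin

text \<open>
  Let \<open>d\<close> be a nonzero vector in the kernel of \<open>A\<close>. For any right inverse \<open>G\<close> and any
  \<open>t\<close> with \<open>d\<^sub>t \<noteq> 0\<close>, subtracting \<open>d / d\<^sub>t\<close> times the \<open>t\<close>-th row of \<open>G\<close> gives a right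
  inverse with a zero row \<open>t\<close>, i.e. the lift of the inverse of some basis \<open>A[:,T']\<close>;
  so its 1-norm is at least that of \<open>H\<close>. The triangle inequality bounds the norm of this
  perturbed matrix in terms of \<open>\<parallel>G\<parallel>\<^sub>1\<close>, the 1-norm \<open>a\<^sub>t\<close> of row \<open>t\<close> and \<open>\<parallel>d\<parallel>\<^sub>1 / |d\<^sub>t|\<close>.
  Averaging these \<open>r + 1\<close> inequalities, via convexity of \<open>x \<mapsto> x / (\<parallel>d\<parallel>\<^sub>1 - 2x)\<close>,
  yields \<open>\<parallel>H\<parallel>\<^sub>1 \<le> 2r/(r+1) \<parallel>G\<parallel>\<^sub>1\<close>. Generalized inverses of \<open>A\<close> are right inverses,
  since \<open>A\<close> has the right inverse \<open>H\<close>.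
\<close>

definition norm1_vec :: "real vec \<Rightarrow> real" where
  "norm1_vec v = (\<Sum>i<dim_vec v. \<bar>v $ i\<bar>)"

lemma norm1_mat_eq_sum_rows:
  "norm1_mat G = (\<Sum>i<dim_row G. norm1_vec (row G i))"
  unfolding norm1_mat_def norm1_vec_def by simp

lemma mult_mat_entry:
  fixes A G :: "'a :: comm_semiring_0 mat"
  assumes "A \<in> carrier_mat p n" "G \<in> carrier_mat n q" "i < p" "j < q"
  shows "(A * G) $$ (i, j) = (\<Sum>l<n. A $$ (i, l) * G $$ (l, j))"
  using assms by (auto simp: scalar_prod_def lessThan_atLeast0 intro!: sum.cong)

lemma inv_mat_eqI:
  fixes M B :: "'a :: field mat"
  assumes M: "M \<in> carrier_mat n n" and B: "B \<in> carrier_mat n n" and MB: "M * B = 1\<^sub>m n"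
  shows "inv_mat M = B"
  unfolding inv_mat_def carrier_matD(1)[OF M]
proof (rule the_equality)
  have BM: "B * M = 1\<^sub>m n" by (rule mat_mult_left_right_inverse[OF M B MB])
  show "B \<in> carrier_mat n n \<and> M * B = 1\<^sub>m n \<and> B * M = 1\<^sub>m n"
    using B MB BM by simp
  fix C assume C: "C \<in> carrier_mat n n \<and> M * C = 1\<^sub>m n \<and> C * M = 1\<^sub>m n"
  then have Cc: "C \<in> carrier_mat n n" by simp
  have "C = C * (M * B)" using right_mult_one_mat[OF Cc] MB by simp
  also have "\<dots> = (C * M) * B" using assoc_mult_mat[OF Cc M B] by simp
  also have "\<dots> = B" using left_mult_one_mat[OF B] C by simp
  finally show "C = B" .
qed

lemma det_nonzero_if_right_inverse:
  fixes M B :: "'a :: field mat"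
  assumes "M \<in> carrier_mat n n" "B \<in> carrier_mat n n" "M * B = 1\<^sub>m n"
  shows "det M \<noteq> 0"
  using det_mult[OF assms(1,2)] assms(3) by auto

lemma inv_mat_right_inverse:
  fixes M :: "'a :: field mat"
  assumes M: "M \<in> carrier_mat n n" and "det M \<noteq> 0"
  shows "inv_mat M \<in> carrier_mat n n" "M * inv_mat M = 1\<^sub>m n"
proof -
  have "M \<in> Units (ring_mat TYPE('a) n ())" by (rule det_non_zero_imp_unit[OF M \<open>det M \<noteq> 0\<close>])
  then obtain B where B: "B \<in> carrier_mat n n" and MB: "M * B = 1\<^sub>m n"
    unfolding Units_def ring_mat_def by auto
  show "inv_mat M \<in> carrier_mat n n" "M * inv_mat M = 1\<^sub>m n"
    using inv_mat_eqI[OF M B MB] B MB by auto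
qed

definition row_submat :: "'a mat \<Rightarrow> nat list \<Rightarrow> 'a mat" where
  "row_submat G T = mat (length T) (dim_col G) (\<lambda>(i, j). G $$ (T ! i, j))"

lemma sum_nth_eq_sum_lessThan:
  fixes f :: "nat \<Rightarrow> 'a :: comm_monoid_add"
  assumes T: "distinct T" "set T \<subseteq> {0..<n}"
    and zero: "\<And>i. i < n \<Longrightarrow> i \<notin> set T \<Longrightarrow> f i = 0"
  shows "(\<Sum>l<length T. f (T ! l)) = (\<Sum>i<n. f i)"
proof -
  have "(\<Sum>l<length T. f (T ! l)) = (\<Sum>i\<in>set T. f i)"
    using sum.reindex_bij_betw[OF bij_betw_nth[OF T(1) refl refl], of f] by simp
  also have "\<dots> = (\<Sum>i<n. f i)"
    by (rule sum.mono_neutral_left) (use T zero in auto)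
  finally show ?thesis .
qed

lemma col_submat_mult_row_submat:
  fixes A G :: "'a :: comm_semiring_0 mat"
  assumes A: "A \<in> carrier_mat m n" and G: "G \<in> carrier_mat n p"
    and T: "distinct T" "set T \<subseteq> {0..<n}"
    and zero: "\<And>i j. i < n \<Longrightarrow> i \<notin> set T \<Longrightarrow> j < p \<Longrightarrow> G $$ (i, j) = 0"
  shows "col_submat A T * row_submat G T = A * G"
proof (rule eq_matI)
  fix i j assume i: "i < dim_row (A * G)" and j: "j < dim_col (A * G)"
  have "(col_submat A T * row_submat G T) $$ (i, j) = (\<Sum>l<length T. A $$ (i, T ! l) * G $$ (T ! l, j))"
    using i j A G unfolding col_submat_def row_submat_def
    by (auto simp: scalar_prod_def lessThan_atLeast0 intro!: sum.cong)
  also have "\<dots> = (\<Sum>l<n. A $$ (i, l) * G $$ (l, j))"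
    by (rule sum_nth_eq_sum_lessThan[OF T]) (use zero j G in auto)
  also have "\<dots> = (A * G) $$ (i, j)"
    using i j A G by (intro mult_mat_entry[symmetric]) auto
  finally show "(col_submat A T * row_submat G T) $$ (i, j) = (A * G) $$ (i, j)" .
qed (use A G in \<open>auto simp: col_submat_def row_submat_def\<close>)

lemma norm1_row_submat:
  assumes G: "G \<in> carrier_mat n p"
    and T: "distinct T" "set T \<subseteq> {0..<n}"
    and zero: "\<And>i j. i < n \<Longrightarrow> i \<notin> set T \<Longrightarrow> j < p \<Longrightarrow> G $$ (i, j) = 0"
  shows "norm1_mat (row_submat G T) = norm1_mat G"
proof -
  have "norm1_mat (row_submat G T) = (\<Sum>l<length T. (\<lambda>i. \<Sum>j<p. \<bar>G $$ (i, j)\<bar>) (T ! l))"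
    using G unfolding norm1_mat_def row_submat_def by simp
  also have "\<dots> = (\<Sum>i<n. \<Sum>j<p. \<bar>G $$ (i, j)\<bar>)"
    by (rule sum_nth_eq_sum_lessThan[OF T]) (use zero in auto)
  finally show ?thesis using G unfolding norm1_mat_def by simp
qed

lemma lift_rows_carrier: "B \<in> carrier_mat r p \<Longrightarrow> lift_rows n T B \<in> carrier_mat n p"
  unfolding lift_rows_def by auto

lemma lift_rows_zero: "i \<notin> set T \<Longrightarrow> i < n \<Longrightarrow> j < dim_col B \<Longrightarrow> lift_rows n T B $$ (i, j) = 0"
  unfolding lift_rows_def by auto

lemma row_submat_lift_rows:
  assumes B: "B \<in> carrier_mat r p" and T: "distinct T" "length T = r" "set T \<subseteq> {0..<n}"
  shows "row_submat (lift_rows n T B) T = B"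
proof (rule eq_matI)
  fix i j assume i: "i < dim_row B" and j: "j < dim_col B"
  have "T ! i < n" using T i B nth_mem by fastforce
  moreover have "(THE k. k < length T \<and> T ! k = T ! i) = i"
    using T i B by (auto simp: nth_eq_iff_index_eq)
  ultimately show "row_submat (lift_rows n T B) T $$ (i, j) = B $$ (i, j)"
    using i j B T unfolding row_submat_def lift_rows_def by auto
qed (use B T in \<open>auto simp: row_submat_def lift_rows_def\<close>)

lemma lift_rows_inv_col_submat:
  fixes A :: "real mat"
  assumes A: "A \<in> carrier_mat r n" and T: "distinct T" "length T = r" "set T \<subseteq> {0..<n}"
    and det: "det (col_submat A T) \<noteq> 0"
  defines "H \<equiv> lift_rows n T (inv_mat (col_submat A T))"
  shows "H \<in> carrier_mat n r" "A * H = 1\<^sub>m r" "norm1_mat H = norm1_mat (inv_mat (col_submat A T))"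
    and "i \<notin> set T \<Longrightarrow> i < n \<Longrightarrow> j < r \<Longrightarrow> H $$ (i, j) = 0"
proof -
  have M: "col_submat A T \<in> carrier_mat r r" using A T unfolding col_submat_def by auto
  note B = inv_mat_right_inverse[OF M det]
  show H: "H \<in> carrier_mat n r" unfolding H_def by (rule lift_rows_carrier[OF B(1)])
  show zero: "\<And>i j. i \<notin> set T \<Longrightarrow> i < n \<Longrightarrow> j < r \<Longrightarrow> H $$ (i, j) = 0"
    unfolding H_def using B(1) by (simp add: lift_rows_zero)
  have restrict: "row_submat H T = inv_mat (col_submat A T)"
    unfolding H_def by (rule row_submat_lift_rows[OF B(1) T])
  show "A * H = 1\<^sub>m r"
    using col_submat_mult_row_submat[OF A H T(1,3)] zero restrict B(2) by simp
  show "norm1_mat H = norm1_mat (inv_mat (col_submat A T))"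
    using norm1_row_submat[OF H T(1,3)] zero restrict by simp
qed

lemma right_inverse_zero_row_basis:
  fixes A G :: "real mat"
  assumes A: "A \<in> carrier_mat r (r + 1)" and G: "G \<in> carrier_mat (r + 1) r"
    and AG: "A * G = 1\<^sub>m r" and t: "t < r + 1" and zero_row: "\<forall>j<r. G $$ (t, j) = 0"
  obtains T' where "adm_cols r T'" "det (col_submat A T') \<noteq> 0"
    "norm1_mat (inv_mat (col_submat A T')) = norm1_mat G"
proof
  define T' where "T' = filter (\<lambda>i. i \<noteq> t) [0..<r + 1]"
  have T': "distinct T'" "set T' = {0..<r + 1} - {t}" unfolding T'_def by auto
  then have "length T' = r" using distinct_card[OF T'(1)] t by simp
  then show adm: "adm_cols r T'" unfolding adm_cols_def using T' by auto
  have zero: "\<And>i j. i < r + 1 \<Longrightarrow> i \<notin> set T' \<Longrightarrow> j < r \<Longrightarrow> G $$ (i, j) = 0"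
    using zero_row T'(2) by auto
  have M: "col_submat A T' \<in> carrier_mat r r" and R: "row_submat G T' \<in> carrier_mat r r"
    using A G \<open>length T' = r\<close> unfolding col_submat_def row_submat_def by auto
  have MR: "col_submat A T' * row_submat G T' = 1\<^sub>m r"
    using col_submat_mult_row_submat[OF A G T'(1) _ zero] T'(2) AG by auto
  show "det (col_submat A T') \<noteq> 0" by (rule det_nonzero_if_right_inverse[OF M R MR])
  show "norm1_mat (inv_mat (col_submat A T')) = norm1_mat G"
    using inv_mat_eqI[OF M R MR] norm1_row_submat[OF G T'(1) _ zero] T'(2) by auto
qed

lemma adm_cols_missing_index:
  assumes "adm_cols r T"
  obtains k where "k < r + 1" "k \<notin> set T"
proof -
  have "card (set T) \<noteq> card {0..<r + 1}"
    using assms distinct_card[of T] unfolding adm_cols_def by simp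
  then have "set T \<noteq> {0..<r + 1}" by metis
  then obtain k where "k \<in> {0..<r + 1} - set T" using assms unfolding adm_cols_def by blast
  then show ?thesis using that by auto
qed

lemma right_inverse_reflexive_ah_symmetric:
  fixes A H :: "'a :: comm_ring_1 mat"
  assumes A: "A \<in> carrier_mat m n" and H: "H \<in> carrier_mat n m" and AH: "A * H = 1\<^sub>m m"
  shows "A * H * A = A" "H * A * H = H" "transpose_mat (A * H) = A * H"
proof -
  show "A * H * A = A" using left_mult_one_mat[OF A] AH by simp
  have "H * A * H = H * (A * H)" using A H by simp
  then show "H * A * H = H" using right_mult_one_mat[OF H] AH by simp
  show "transpose_mat (A * H) = A * H" using AH by simp
qed

lemma generalized_inverse_is_right_inverse:
  fixes A G H :: "'a :: comm_ring_1 mat"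
  assumes A: "A \<in> carrier_mat m n" and H: "H \<in> carrier_mat n m" and AH: "A * H = 1\<^sub>m m"
    and G: "G \<in> carrier_mat n m" and AGA: "A * G * A = A"
  shows "A * G = 1\<^sub>m m"
proof -
  have "A * G = A * G * (A * H)" using right_mult_one_mat[OF mult_carrier_mat[OF A G]] AH by simp
  also have "\<dots> = (A * G * A) * H" using assoc_mult_mat[OF mult_carrier_mat[OF A G] A H] by simp
  finally show ?thesis using AGA AH by simp
qed

lemma right_inverse_zero_row_kernel_vector:
  fixes A H :: "real mat"
  assumes A: "A \<in> carrier_mat m n" and H: "H \<in> carrier_mat n m" and AH: "A * H = 1\<^sub>m m"
    and k: "k < n" and zero_row: "\<forall>j<m. H $$ (k, j) = 0"
  obtains d where "d \<in> carrier_vec n" "A *\<^sub>v d = 0\<^sub>v m" "d \<noteq> 0\<^sub>v n"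
proof
  define d where "d = col (1\<^sub>m n - H * A) k"
  show "d \<in> carrier_vec n" unfolding d_def using H A by (simp add: carrier_vecI)
  have "A * (1\<^sub>m n - H * A) = A - A * H * A"
    using mult_minus_distrib_mat[OF A one_carrier_mat mult_carrier_mat[OF H A]]
      right_mult_one_mat[OF A] assoc_mult_mat[OF A H A] by simp
  also have "\<dots> = 0\<^sub>m m n" using left_mult_one_mat[OF A] AH A by simp
  moreover have "A *\<^sub>v d = col (A * (1\<^sub>m n - H * A)) k"
    unfolding d_def using H A k by (intro col_mult2[symmetric]) auto
  ultimately show "A *\<^sub>v d = 0\<^sub>v m" using k by auto
  have "(H * A) $$ (k, k) = 0"
    using mult_mat_entry[OF H A k k] zero_row by simp
  then have "d $ k = 1" unfolding d_def using A H k by simp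
  then show "d \<noteq> 0\<^sub>v n" using k by auto
qed

subsection \<open>Eliminating a row of a right inverse along a kernel vector\<close>

definition eliminate_row :: "'a :: field mat \<Rightarrow> 'a vec \<Rightarrow> nat \<Rightarrow> 'a mat" where
  "eliminate_row G d t = mat (dim_row G) (dim_col G) (\<lambda>(i, j). G $$ (i, j) - d $ i / d $ t * G $$ (t, j))"

lemma eliminate_row_dim [simp]:
  "dim_row (eliminate_row G d t) = dim_row G" "dim_col (eliminate_row G d t) = dim_col G"
  unfolding eliminate_row_def by auto

lemma eliminate_row_carrier: "G \<in> carrier_mat n p \<Longrightarrow> eliminate_row G d t \<in> carrier_mat n p"
  unfolding carrier_mat_def by simp

lemma eliminate_row_zero:
  "d $ t \<noteq> 0 \<Longrightarrow> t < dim_row G \<Longrightarrow> j < dim_col G \<Longrightarrow> eliminate_row G d t $$ (t, j) = 0"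
  unfolding eliminate_row_def by simp

lemma mult_eliminate_row:
  fixes A G :: "'a :: field mat"
  assumes A: "A \<in> carrier_mat m n" and G: "G \<in> carrier_mat n p"
    and d: "d \<in> carrier_vec n" and Ad: "A *\<^sub>v d = 0\<^sub>v m"
  shows "A * eliminate_row G d t = A * G"
proof (rule eq_matI)
  fix i j assume "i < dim_row (A * G)" and "j < dim_col (A * G)"
  then have i: "i < m" and j: "j < p" using A G by auto
  have kernel: "(\<Sum>l<n. A $$ (i, l) * d $ l) = 0"
    using arg_cong[OF Ad, of "\<lambda>v. v $ i"] i A d
    by (auto simp: scalar_prod_def lessThan_atLeast0 intro: sum.cong)
  have "(A * eliminate_row G d t) $$ (i, j) = (\<Sum>l<n. A $$ (i, l) * eliminate_row G d t $$ (l, j))"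
    by (rule mult_mat_entry[OF A eliminate_row_carrier[OF G] i j])
  also have "\<dots> = (\<Sum>l<n. A $$ (i, l) * G $$ (l, j) - A $$ (i, l) * d $ l * (G $$ (t, j) / d $ t))"
    using j G by (auto simp: eliminate_row_def algebra_simps intro!: sum.cong)
  also have "\<dots> = (A * G) $$ (i, j) - (\<Sum>l<n. A $$ (i, l) * d $ l) * (G $$ (t, j) / d $ t)"
    by (simp only: mult_mat_entry[OF A G i j] sum_subtractf sum_distrib_right)
  finally show "(A * eliminate_row G d t) $$ (i, j) = (A * G) $$ (i, j)" using kernel by simp
qed (use A G in \<open>auto simp: eliminate_row_def\<close>)

lemma norm1_eliminate_row_le:
  fixes G :: "real mat"
  assumes G: "G \<in> carrier_mat n p" and d: "d \<in> carrier_vec n" and t: "t < n" and dt: "d $ t \<noteq> 0"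
  shows "norm1_mat (eliminate_row G d t)
    \<le> norm1_mat G - 2 * norm1_vec (row G t) + norm1_vec d / \<bar>d $ t\<bar> * norm1_vec (row G t)"
proof -
  define a where "a i = norm1_vec (row G i)" for i
  have a: "a i = (\<Sum>j<p. \<bar>G $$ (i, j)\<bar>)" if "i < n" for i
    using G that unfolding a_def norm1_vec_def by simp
  have row_le: "norm1_vec (row (eliminate_row G d t) i)
      \<le> a i + \<bar>d $ i\<bar> / \<bar>d $ t\<bar> * a t - (if i = t then a t + \<bar>d $ t\<bar> / \<bar>d $ t\<bar> * a t else 0)"
    if i: "i < n" for i
  proof (cases "i = t")
    case True
    then show ?thesis using G i dt unfolding norm1_vec_def eliminate_row_def by simp
  next
    case False
    have "norm1_vec (row (eliminate_row G d t) i) = (\<Sum>j<p. \<bar>G $$ (i, j) - d $ i / d $ t * G $$ (t, j)\<bar>)"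
      using G i unfolding norm1_vec_def eliminate_row_def by simp
    also have "\<dots> \<le> (\<Sum>j<p. \<bar>G $$ (i, j)\<bar> + \<bar>d $ i\<bar> / \<bar>d $ t\<bar> * \<bar>G $$ (t, j)\<bar>)"
      by (rule sum_mono) (simp add: abs_mult order_trans[OF abs_triangle_ineq4])
    also have "\<dots> = a i + \<bar>d $ i\<bar> / \<bar>d $ t\<bar> * a t"
      using i t by (simp add: a sum.distrib sum_distrib_left)
    finally show ?thesis using False by simp
  qed
  have "norm1_mat (eliminate_row G d t) = (\<Sum>i<n. norm1_vec (row (eliminate_row G d t) i))"
    using carrier_matD[OF G] by (simp add: norm1_mat_eq_sum_rows)
  also have "\<dots> \<le> (\<Sum>i<n. a i + \<bar>d $ i\<bar> / \<bar>d $ t\<bar> * a t - (if i = t then a t + \<bar>d $ t\<bar> / \<bar>d $ t\<bar> * a t else 0))"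
    by (rule sum_mono) (use row_le in simp)
  also have "\<dots> = norm1_mat G - 2 * a t + norm1_vec d / \<bar>d $ t\<bar> * a t"
    using G d t dt
    by (simp add: norm1_mat_eq_sum_rows norm1_vec_def a_def sum_subtractf sum.distrib
        sum_divide_distrib[symmetric] sum_distrib_right[symmetric])
  finally show ?thesis unfolding a_def .
qed

subsection \<open>The averaging inequality\<close>

text \<open>The tangent line of the convex function \<open>x \<mapsto> x / (D - 2x)\<close> at \<open>x = D / m\<close>.\<close>

lemma tangent_line_bound:
  fixes x a b D m :: real
  assumes b: "0 < b" and x: "0 \<le> x" "2 * x < D" and h: "b * x \<le> (D - 2 * x) * a"
  shows "b * (m\<^sup>2 * x - 2 * D) \<le> (m - 2)\<^sup>2 * D * a"
proof -
  have "(m - 2)\<^sup>2 * D * (b * x) - b * (m\<^sup>2 * x - 2 * D) * (D - 2 * x) = b * (2 * (m * x - D)\<^sup>2)"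
    by (simp add: power2_eq_square algebra_simps)
  moreover have "0 \<le> b * (2 * (m * x - D)\<^sup>2)" using b by simp
  ultimately have "b * (m\<^sup>2 * x - 2 * D) * (D - 2 * x) \<le> (m - 2)\<^sup>2 * D * (b * x)"
    by linarith
  also have "\<dots> \<le> (m - 2)\<^sup>2 * D * ((D - 2 * x) * a)"
    using h x by (intro mult_left_mono) auto
  also have "\<dots> = ((m - 2)\<^sup>2 * D * a) * (D - 2 * x)"
    by (simp add: algebra_simps)
  finally show ?thesis by (rule mult_right_le_imp_le) (use x in simp)
qed

lemma convexity_sum_bound:
  fixes x a :: "nat \<Rightarrow> real" and b :: real
  assumes b: "0 < b" and x: "\<And>t. t < n \<Longrightarrow> 0 \<le> x t" and a: "\<And>t. t < n \<Longrightarrow> 0 \<le> a t"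
    and pos: "0 < (\<Sum>t<n. x t)"
    and h: "\<And>t. t < n \<Longrightarrow> b * x t \<le> ((\<Sum>s<n. x s) - 2 * x t) * a t"
  shows "b * real n \<le> (real n - 2) * (\<Sum>t<n. a t)"
proof -
  define N D m where "N = (\<Sum>t<n. a t)" and "D = (\<Sum>t<n. x t)" and "m = real n"
  have "n \<noteq> 0" using pos by (intro notI) simp
  have lt: "2 * x t < D" if t: "t < n" for t
  proof (rule ccontr)
    assume "\<not> 2 * x t < D"
    then have "(D - 2 * x t) * a t \<le> 0" using a[OF t] by (intro mult_nonpos_nonneg) auto
    then have "b * x t \<le> 0" using h[OF t] unfolding D_def by linarith
    then have "x t \<le> 0" using b by (simp add: mult_le_0_iff)
    then show False using \<open>\<not> 2 * x t < D\<close> x[OF t] pos unfolding D_def by linarith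
  qed
  have "2 * D < m * D"
  proof -
    have "(\<Sum>t<n. 2 * x t) < (\<Sum>t<n. D)" using \<open>n \<noteq> 0\<close> lt by (intro sum_strict_mono) auto
    then show ?thesis unfolding D_def m_def by (simp add: sum_distrib_left)
  qed
  then have m: "2 < m" using pos unfolding D_def by simp
  have "(\<Sum>t<n. b * (m\<^sup>2 * x t - 2 * D)) \<le> (\<Sum>t<n. (m - 2)\<^sup>2 * D * a t)"
    using tangent_line_bound[OF b x lt h[folded D_def]] by (intro sum_mono) auto
  moreover have "(\<Sum>t<n. b * (m\<^sup>2 * x t - 2 * D)) = (\<Sum>t<n. (b * m\<^sup>2) * x t) - (\<Sum>t<n. 2 * b * D)"
    by (simp only: sum_subtractf[symmetric] right_diff_distrib mult.assoc mult.left_commute)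
  moreover have "(\<Sum>t<n. (b * m\<^sup>2) * x t) = b * m\<^sup>2 * D"
    unfolding D_def by (simp add: sum_distrib_left)
  moreover have "(\<Sum>t<n. 2 * b * D) = m * (2 * b * D)"
    unfolding m_def by simp
  moreover have "(\<Sum>t<n. (m - 2)\<^sup>2 * D * a t) = (m - 2)\<^sup>2 * D * N"
    unfolding N_def by (simp add: sum_distrib_left)
  moreover have "b * m\<^sup>2 * D - m * (2 * b * D) = (b * m) * ((m - 2) * D)"
    and "(m - 2)\<^sup>2 * D * N = ((m - 2) * N) * ((m - 2) * D)"
    by (simp_all add: power2_eq_square algebra_simps)
  ultimately have "(b * m) * ((m - 2) * D) \<le> ((m - 2) * N) * ((m - 2) * D)"
    by linarith
  moreover have "0 < (m - 2) * D" using m pos unfolding D_def by simp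
  ultimately show ?thesis unfolding m_def N_def by (rule mult_right_le_imp_le)
qed

lemma averaging_bound:
  fixes x a :: "nat \<Rightarrow> real" and \<alpha> :: real
  assumes x: "\<And>t. t < n \<Longrightarrow> 0 \<le> x t" and a: "\<And>t. t < n \<Longrightarrow> 0 \<le> a t"
    and pos: "0 < (\<Sum>t<n. x t)"
    and h: "\<And>t. t < n \<Longrightarrow> \<alpha> * x t \<le> x t * (\<Sum>s<n. a s) + ((\<Sum>s<n. x s) - 2 * x t) * a t"
  shows "\<alpha> \<le> 2 * (real n - 1) / real n * (\<Sum>t<n. a t)"
proof -
  define N where "N = (\<Sum>t<n. a t)"
  have "n \<noteq> 0" using pos by (intro notI) simp
  have N: "0 \<le> N" unfolding N_def using a by (auto intro: sum_nonneg)
  show ?thesis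
  proof (cases "\<alpha> \<le> N")
    case True
    show ?thesis
    proof (cases "n = 1")
      case True
      then have "\<alpha> * x 0 \<le> 0" and "0 < x 0" using h[of 0] pos by simp_all
      then show ?thesis using True by (simp add: mult_le_0_iff)
    next
      case False
      then have "1 \<le> 2 * (real n - 1) / real n" using \<open>n \<noteq> 0\<close> by (simp add: field_simps)
      then have "1 * N \<le> 2 * (real n - 1) / real n * N" using N by (rule mult_right_mono)
      then show ?thesis using \<open>\<alpha> \<le> N\<close> unfolding N_def by simp
    qed
  next
    case False
    have "(\<alpha> - N) * real n \<le> (real n - 2) * N"
      unfolding N_def using False x a pos
      by (intro convexity_sum_bound) (auto simp: N_def algebra_simps dest: h)
    then show ?thesis using \<open>n \<noteq> 0\<close> unfolding N_def by (simp add: field_simps)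
  qed
qed

subsection \<open>A lower bound on the 1-norm of right inverses\<close>

lemma norm1_right_inverse_lower_bound:
  fixes A G :: "real mat"
  assumes A: "A \<in> carrier_mat m n" and G: "G \<in> carrier_mat n m" and AG: "A * G = 1\<^sub>m m"
    and d: "d \<in> carrier_vec n" "A *\<^sub>v d = 0\<^sub>v m" "d \<noteq> 0\<^sub>v n"
    and zero_row_bound: "\<And>G' t. G' \<in> carrier_mat n m \<Longrightarrow> A * G' = 1\<^sub>m m \<Longrightarrow> t < n \<Longrightarrow>
                (\<forall>j<m. G' $$ (t, j) = 0) \<Longrightarrow> \<alpha> \<le> norm1_mat G'"
  shows "\<alpha> \<le> 2 * (real n - 1) / real n * norm1_mat G"
proof -
  define a where "a t = norm1_vec (row G t)" for t
  have N: "norm1_mat G = (\<Sum>t<n. a t)" using G unfolding a_def by (simp add: norm1_mat_eq_sum_rows)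
  have D: "norm1_vec d = (\<Sum>t<n. \<bar>d $ t\<bar>)" using d unfolding norm1_vec_def by simp
  have "\<alpha> * \<bar>d $ t\<bar> \<le> \<bar>d $ t\<bar> * norm1_mat G + (norm1_vec d - 2 * \<bar>d $ t\<bar>) * a t"
    if t: "t < n" for t
  proof (cases "d $ t = 0")
    case True
    then show ?thesis using a_def by (simp add: norm1_vec_def sum_nonneg)
  next
    case False
    have "A * eliminate_row G d t = 1\<^sub>m m" using mult_eliminate_row[OF A G d(1,2)] AG by simp
    moreover have "\<forall>j<m. eliminate_row G d t $$ (t, j) = 0"
      using G t False by (simp add: eliminate_row_zero)
    ultimately have "\<alpha> \<le> norm1_mat (eliminate_row G d t)"
      by (rule zero_row_bound[OF eliminate_row_carrier[OF G] _ t])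
    also have "\<dots> \<le> norm1_mat G - 2 * a t + norm1_vec d / \<bar>d $ t\<bar> * a t"
      unfolding a_def by (rule norm1_eliminate_row_le[OF G d(1) t False])
    finally show ?thesis using False by (simp add: field_simps)
  qed
  moreover have "0 < (\<Sum>t<n. \<bar>d $ t\<bar>)"
  proof -
    obtain t where "t < n" "d $ t \<noteq> 0" using d(1,3) by (auto simp: vec_eq_iff)
    then show ?thesis by (intro sum_pos2[of _ t]) auto
  qed
  ultimately show ?thesis unfolding N D
    by (intro averaging_bound) (auto simp: a_def norm1_vec_def sum_nonneg)
qed

theorem theorem6p3:
  fixes r :: nat and A :: "real mat" and T :: "nat list"
  assumes A_dim: "A \<in> carrier_mat r (r + 1)"
    and A_rank: "vec_space.rank r A = r"
    and T_adm: "adm_cols r T"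
    and T_nonsing: "det (col_submat A T) \<noteq> 0"
    and T_min: "\<And>T'. adm_cols r T' \<Longrightarrow> det (col_submat A T') \<noteq> 0 \<Longrightarrow>
                 norm1_mat (inv_mat (col_submat A T)) \<le> norm1_mat (inv_mat (col_submat A T'))"
    and H_def: "H = lift_rows (r + 1) T (inv_mat (col_submat A T))"
  shows "A * H * A = A \<and> H * A * H = H \<and> transpose_mat (A * H) = A * H \<and>
         (\<forall>H'. H' \<in> carrier_mat (r + 1) r \<longrightarrow> A * H' = 1\<^sub>m r \<longrightarrow>
                norm1_mat H \<le> (2 * real r / (real r + 1)) * norm1_mat H') \<and>
         (\<forall>H'. H' \<in> carrier_mat (r + 1) r \<longrightarrow> A * H' * A = A \<longrightarrow>
                norm1_mat H \<le> (2 * real r / (real r + 1)) * norm1_mat H')"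
proof -
  have T: "distinct T" "length T = r" "set T \<subseteq> {0..<r + 1}" using T_adm unfolding adm_cols_def by auto
  note H = lift_rows_inv_col_submat[OF A_dim T T_nonsing, folded H_def]
  obtain k where k: "k < r + 1" "k \<notin> set T" using adm_cols_missing_index[OF T_adm] .
  obtain d where d: "d \<in> carrier_vec (r + 1)" "A *\<^sub>v d = 0\<^sub>v r" "d \<noteq> 0\<^sub>v (r + 1)"
    using right_inverse_zero_row_kernel_vector[OF A_dim H(1,2) k(1)] H(4)[OF k(2,1)] by blast
  have bound: "norm1_mat H \<le> (2 * real r / (real r + 1)) * norm1_mat G"
    if G: "G \<in> carrier_mat (r + 1) r" "A * G = 1\<^sub>m r" for G
  proof -
    have "norm1_mat H \<le> 2 * (real (r + 1) - 1) / real (r + 1) * norm1_mat G"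
    proof (rule norm1_right_inverse_lower_bound[OF A_dim G d])
      fix G' t assume "G' \<in> carrier_mat (r + 1) r" "A * G' = 1\<^sub>m r" "t < r + 1" "\<forall>j<r. G' $$ (t, j) = 0"
      then obtain T' where "adm_cols r T'" "det (col_submat A T') \<noteq> 0"
        "norm1_mat (inv_mat (col_submat A T')) = norm1_mat G'"
        by (rule right_inverse_zero_row_basis[OF A_dim])
      then show "norm1_mat H \<le> norm1_mat G'" using T_min H(3) by metis
    qed
    then show ?thesis by (simp add: add.commute)
  qed
  show ?thesis
    using right_inverse_reflexive_ah_symmetric[OF A_dim H(1,2)] bound
      generalized_inverse_is_right_inverse[OF A_dim H(1,2)] by blast
qed

end
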